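(* Let $\kappa$ be a regular cardinal, $\theta<\kappa$, and let $c:{}^{\kappa>}\omega\to\theta$ be a coloring. (1) There are $\nu^*\in{}^{\kappa>}\omega$ and $j<\theta$ such that for every $\nu\in{}^{\kappa>}\omega$ with $\nu^*\trianglelefteq\nu$ there is $\rho\in{}^{\kappa>}\omega$ with $\nu\trianglelefteq\rho$ and $c(\rho)=j$. (2) There is an embedding $h:{}^{\omega>}\omega\to{}^{\kappa>}\omega$ such that $h(\eta)^\frown\langle i\rangle\trianglelefteq h(\eta^\frown\langle i\rangle)$ for all $\eta\in{}^{\omega>}\omega$ and $i<\omega$, and the range of $h$ is monochromatic, i.e. $c(h(\eta))=c(h(\nu))$ for all $\eta,\nu\in{}^{\omega>}\omega$.
   Context: ${}^{\kappa>}\omega$ is the set of sequences of natural numbers indexed by ordinals $<\kappa$; $\trianglelefteq$ is the initial-segment order and $^\frown$ is concatenation. *)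

theory Defs
  imports Main "HOL-Library.Sublist"
begin

text \<open>The cardinal kappa is represented by a (cardinal) well-order r; an ordinal
  below kappa is an element alpha of Field r, identified with its strict initial
  segment underS r alpha.  A sequence in kappa>omega of length alpha is a partial
  function 'a => nat option whose domain is exactly underS r alpha.\<close>

definition kseq :: "'a rel \<Rightarrow> ('a \<Rightarrow> nat option) \<Rightarrow> bool" where
  "kseq r s \<longleftrightarrow> (\<exists>\<alpha>\<in>Field r. dom s = underS r \<alpha>)"

definition klen :: "'a rel \<Rightarrow> ('a \<Rightarrow> nat option) \<Rightarrow> 'a" where
  "klen r s = (THE \<alpha>. \<alpha> \<in> Field r \<and> dom s = underS r \<alpha>)"

definition kinit :: "('a \<Rightarrow> nat option) \<Rightarrow> ('a \<Rightarrow> nat option) \<Rightarrow> bool" where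
  "kinit s t \<longleftrightarrow> s \<subseteq>\<^sub>m t"

definition kapp1 :: "'a rel \<Rightarrow> ('a \<Rightarrow> nat option) \<Rightarrow> nat \<Rightarrow> ('a \<Rightarrow> nat option)" where
  "kapp1 r s i = s(klen r s \<mapsto> i)"

end

theory Submission
  imports Defs
begin

(* Part (1), by contradiction: otherwise, for every colour j the nodes above which j never
   occurs are dense.  As kappa is regular, every chain of fewer than kappa nodes has an upper
   bound (its union, padded to a length below kappa).  Since there are fewer than kappa
   colours, Zorn's lemma then gives one node lying above a j-avoiding node for every colour j,
   which is absurd for j its own colour.
   Part (2): above nu*, colour j is dense, so h(eta^<i>) can be chosen as a j-coloured
   extension of h(eta)^<i>.  Then every h(eta^<i>^zeta) has entry i at position len(h eta),
   where h(eta) itself is undefined, so h reflects the initial-segment order. *)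

lemma Card_order_Linear_order: "Card_order r \<Longrightarrow> Linear_order r"
  using Card_order_wo_rel wo_rel.LIN by blast

lemma Card_order_underS_mono:
  assumes "Card_order r" "(\<alpha>, \<beta>) \<in> r"
  shows "underS r \<alpha> \<subseteq> underS r \<beta>"
proof -
  have "Linear_order r" using assms(1) by (rule Card_order_Linear_order)
  then have "trans r" "antisym r" by (simp_all add: order_on_defs)
  then show ?thesis using assms(2) by (rule underS_incr)
qed

lemma chain_map_le_upper_bound:
  assumes "Complete_Partial_Order.chain (\<subseteq>\<^sub>m) X"
  obtains w where "dom w = (\<Union>s\<in>X. dom s)" "\<And>s. s \<in> X \<Longrightarrow> s \<subseteq>\<^sub>m w"
proof -
  define w where "w x = (if \<exists>s\<in>X. x \<in> dom s then (SOME s. s \<in> X \<and> x \<in> dom s) x else None)" for x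
  have agree: "s x = t x" if "s \<in> X" "t \<in> X" "x \<in> dom s" "x \<in> dom t" for s t x
    using chainD[OF assms that(1,2)] that(3,4) unfolding map_le_def by metis
  have le: "s \<subseteq>\<^sub>m w" if s: "s \<in> X" for s
    unfolding map_le_def
  proof
    fix x assume x: "x \<in> dom s"
    define t where "t = (SOME t. t \<in> X \<and> x \<in> dom t)"
    have t: "t \<in> X" "x \<in> dom t"
      using someI[of "\<lambda>t. t \<in> X \<and> x \<in> dom t"] s x unfolding t_def by blast+
    have "w x = t x" using s x unfolding w_def t_def by auto
    then show "s x = w x" using agree[OF s t(1) x t(2)] by simp
  qed
  have "dom w \<subseteq> (\<Union>s\<in>X. dom s)" by (auto simp: w_def split: if_splits)
  moreover have "(\<Union>s\<in>X. dom s) \<subseteq> dom w" using le map_le_implies_dom_le by blast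
  ultimately have "dom w = (\<Union>s\<in>X. dom s)" by (rule subset_antisym)
  then show thesis using le by (rule that)
qed

lemma single_valued_card_of_Range:
  assumes "single_valued R"
  shows "(card_of (Range R), card_of (Domain R)) \<in> ordLeq"
proof -
  have "inj_on fst R" using assms by (auto simp: inj_on_def single_valued_def)
  then have "(card_of R, card_of (Domain R)) \<in> ordLeq"
    using card_of_ordLeq[of R "Domain R"] by (metis fst_eq_Domain order_refl)
  moreover have "(card_of (Range R), card_of R) \<in> ordLeq"
    unfolding snd_eq_Range[symmetric] by (rule card_of_image)
  ultimately show ?thesis using ordLeq_transitive by blast
qed

definition chained_choices ::
    "('p \<Rightarrow> 'p \<Rightarrow> bool) \<Rightarrow> 'i set \<Rightarrow> 'p set \<Rightarrow> ('i \<Rightarrow> 'p set) \<Rightarrow> ('i \<times> 'p) set set"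
  where "chained_choices le I P D = {F. F \<subseteq> I \<times> P \<and> single_valued F
           \<and> Complete_Partial_Order.chain le (Range F) \<and> (\<forall>(i, p)\<in>F. p \<in> D i)}"

lemma chained_choices_Union:
  assumes C: "C \<in> chains (chained_choices le I P D)"
  shows "\<Union>C \<in> chained_choices le I P D"
proof -
  let ?A = "chained_choices le I P D"
  have CA: "C \<subseteq> ?A" using C by (simp add: chains_def)
  have common: "\<exists>F\<in>?A. x \<in> F \<and> y \<in> F" if xy: "x \<in> \<Union>C" "y \<in> \<Union>C" for x y
  proof -
    obtain F G where "F \<in> C" "G \<in> C" "x \<in> F" "y \<in> G" using xy by blast
    moreover have "F \<subseteq> G \<or> G \<subseteq> F" using C \<open>F \<in> C\<close> \<open>G \<in> C\<close> by (auto simp: chains_def chain_subset_def)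
    ultimately show ?thesis using CA by blast
  qed
  have "single_valued (\<Union>C)"
  proof (rule single_valuedI)
    fix i p q assume "(i, p) \<in> \<Union>C" "(i, q) \<in> \<Union>C"
    then obtain F where "F \<in> ?A" "(i, p) \<in> F" "(i, q) \<in> F" using common by blast
    then show "p = q" unfolding chained_choices_def by (auto dest: single_valuedD)
  qed
  moreover have "Complete_Partial_Order.chain le (Range (\<Union>C))"
  proof (rule chainI)
    fix p q assume "p \<in> Range (\<Union>C)" "q \<in> Range (\<Union>C)"
    then obtain i j where "(i, p) \<in> \<Union>C" "(j, q) \<in> \<Union>C" by blast
    then obtain F where "F \<in> ?A" "(i, p) \<in> F" "(j, q) \<in> F" using common by blast
    then have "Complete_Partial_Order.chain le (Range F)" "p \<in> Range F" "q \<in> Range F"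
      unfolding chained_choices_def by blast+
    then show "le p q \<or> le q p" by (rule chainD)
  qed
  moreover have "\<Union>C \<subseteq> I \<times> P" "\<forall>(i, p)\<in>\<Union>C. p \<in> D i" using CA unfolding chained_choices_def by auto
  ultimately show ?thesis unfolding chained_choices_def by simp
qed

lemma upper_bound_meeting_dense_family:
  fixes le :: "'p \<Rightarrow> 'p \<Rightarrow> bool" and D :: "'i \<Rightarrow> 'p set"
  assumes "reflp le" "transp le"
    and bounded: "\<And>X. X \<subseteq> P \<Longrightarrow> Complete_Partial_Order.chain le X \<Longrightarrow> (card_of X, card_of I) \<in> ordLeq
                    \<Longrightarrow> \<exists>u\<in>P. \<forall>x\<in>X. le x u"
    and dense: "\<And>i p. i \<in> I \<Longrightarrow> p \<in> P \<Longrightarrow> \<exists>q\<in>P. le p q \<and> q \<in> D i"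
  shows "\<exists>u\<in>P. \<forall>i\<in>I. \<exists>p\<in>D i. le p u"
proof -
  let ?A = "chained_choices le I P D"
  have "\<forall>C\<in>chains ?A. \<Union>C \<in> ?A" using chained_choices_Union by blast
  then have "\<exists>M\<in>?A. \<forall>F\<in>?A. M \<subseteq> F \<longrightarrow> F = M" by (rule Zorn_Lemma)
  then obtain M where "M \<in> ?A" and maximal: "\<And>F. F \<in> ?A \<Longrightarrow> M \<subseteq> F \<Longrightarrow> F = M"
    by blast
  then have M: "M \<subseteq> I \<times> P" "single_valued M" "Complete_Partial_Order.chain le (Range M)"
    "\<And>i p. (i, p) \<in> M \<Longrightarrow> p \<in> D i"
    unfolding chained_choices_def by auto
  have "(card_of (Domain M), card_of I) \<in> ordLeq" using M(1) by (intro card_of_mono1) blast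
  then have "(card_of (Range M), card_of I) \<in> ordLeq"
    using single_valued_card_of_Range[OF M(2)] ordLeq_transitive by blast
  then obtain u where u: "u \<in> P" "\<And>p. p \<in> Range M \<Longrightarrow> le p u"
    using bounded[OF _ M(3)] M(1) by force
  have total: "\<exists>p. (i, p) \<in> M" if i: "i \<in> I" for i
  proof (rule ccontr)
    assume new: "\<nexists>p. (i, p) \<in> M"
    obtain q where q: "q \<in> P" "le u q" "q \<in> D i" using dense[OF i u(1)] by blast
    have "single_valued (insert (i, q) M)"
      using M(2) new by (auto simp: single_valued_def)
    moreover have "Complete_Partial_Order.chain le (Range (insert (i, q) M))"
    proof -
      have "le p q" if "p \<in> Range M" for p
        using u(2)[OF that] q(2) \<open>transp le\<close> by (blast dest: transpD)
      then show ?thesis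
        using M(3) \<open>reflp le\<close> by (auto simp: Complete_Partial_Order.chain_def reflp_def)
    qed
    ultimately have "insert (i, q) M \<in> ?A" using M i q unfolding chained_choices_def by auto
    then have "insert (i, q) M = M" by (rule maximal) blast
    then show False using new by blast
  qed
  have "\<exists>p\<in>D i. le p u" if i: "i \<in> I" for i
  proof -
    obtain p where "(i, p) \<in> M" using total[OF i] by blast
    then show ?thesis using M(4) u(2)[of p] by blast
  qed
  then show ?thesis using u(1) by blast
qed

lemma kinit_eq_map_le: "kinit = (\<subseteq>\<^sub>m)"
  by (intro ext) (simp add: kinit_def)

lemma kinit_refl: "kinit s s"
  by (simp add: kinit_eq_map_le)

lemma kinit_trans: "kinit s t \<Longrightarrow> kinit t u \<Longrightarrow> kinit s u"
  unfolding kinit_eq_map_le by (rule map_le_trans)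

lemma kinit_SomeD: "kinit s t \<Longrightarrow> s x = Some v \<Longrightarrow> t x = Some v"
  unfolding kinit_def map_le_def by (metis domI)

lemma kseq_extends_bounded_map:
  assumes "\<alpha> \<in> Field r" "dom s \<subseteq> underS r \<alpha>"
  shows "\<exists>u. kseq r u \<and> kinit s u"
proof -
  define u where "u = (\<lambda>x. if x \<in> underS r \<alpha> then Some (0::nat) else None) ++ s"
  have "dom u = underS r \<alpha>" using assms(2) unfolding u_def dom_map_add by (auto simp: dom_def)
  then show ?thesis using assms(1) map_le_map_add unfolding kseq_def kinit_def u_def by blast
qed

lemma kseq_klen:
  assumes "Card_order r" "kseq r s"
  shows "klen r s \<in> Field r" "dom s = underS r (klen r s)"
proof -
  have lin: "Linear_order r" using assms(1) by (rule Card_order_Linear_order)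
  have "\<exists>!\<alpha>. \<alpha> \<in> Field r \<and> dom s = underS r \<alpha>"
  proof (rule ex_ex1I)
    show "\<exists>\<alpha>. \<alpha> \<in> Field r \<and> dom s = underS r \<alpha>" using assms(2) unfolding kseq_def by blast
  next
    fix \<alpha> \<beta> assume "\<alpha> \<in> Field r \<and> dom s = underS r \<alpha>" "\<beta> \<in> Field r \<and> dom s = underS r \<beta>"
    then have "(\<alpha>, \<beta>) \<in> r" "(\<beta>, \<alpha>) \<in> r" using underS_incl_iff[OF lin] by auto
    then show "\<alpha> = \<beta>" using lin by (auto simp: order_on_defs antisym_def)
  qed
  then have "klen r s \<in> Field r \<and> dom s = underS r (klen r s)"
    unfolding klen_def by (rule theI')
  then show "klen r s \<in> Field r" "dom s = underS r (klen r s)" by blast+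
qed

lemma klen_notin_dom: "Card_order r \<Longrightarrow> kseq r s \<Longrightarrow> klen r s \<notin> dom s"
  using kseq_klen by (fastforce simp: underS_def)

lemma kinit_kapp1: "Card_order r \<Longrightarrow> kseq r s \<Longrightarrow> kinit s (kapp1 r s i)"
  using klen_notin_dom by (fastforce simp: kinit_def kapp1_def map_le_def)

lemma kapp1_extends_to_kseq:
  assumes "Cinfinite r" "kseq r s"
  shows "\<exists>t. kseq r t \<and> kinit (kapp1 r s i) t"
proof -
  have co: "Card_order r" using assms(1) by simp
  obtain \<beta> where \<beta>: "\<beta> \<in> Field r" "klen r s \<noteq> \<beta>" "(klen r s, \<beta>) \<in> r"
    using Cinfinite_limit[OF kseq_klen(1)[OF co assms(2)] assms(1)] by blast
  then have "klen r s \<in> underS r \<beta>" by (simp add: underS_def)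
  then have "insert (klen r s) (underS r (klen r s)) \<subseteq> underS r \<beta>"
    using Card_order_underS_mono[OF co \<beta>(3)] by blast
  then have "dom (kapp1 r s i) \<subseteq> underS r \<beta>"
    using kseq_klen(2)[OF co assms(2)] by (simp add: kapp1_def)
  then show ?thesis using kseq_extends_bounded_map[OF \<beta>(1)] by blast
qed

lemma kseq_chain_upper_bound:
  fixes r :: "'a rel"
  assumes "Card_order r" "regularCard r"
    and "X \<subseteq> Collect (kseq r)" "Complete_Partial_Order.chain kinit X" "(card_of X, r) \<in> ordLess"
  shows "\<exists>u. kseq r u \<and> (\<forall>s\<in>X. kinit s u)"
proof -
  define bounded where "bounded \<alpha> = {s :: 'a \<Rightarrow> nat option. dom s \<subseteq> underS r \<alpha>}" for \<alpha>
  have mono: "relChain r bounded"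
    unfolding relChain_def
  proof (intro allI impI)
    fix \<alpha> \<beta> assume "(\<alpha>, \<beta>) \<in> r"
    then have "underS r \<alpha> \<subseteq> underS r \<beta>" by (rule Card_order_underS_mono[OF assms(1)])
    then show "bounded \<alpha> \<subseteq> bounded \<beta>" unfolding bounded_def by auto
  qed
  have cover: "X \<subseteq> (\<Union>\<alpha>\<in>Field r. bounded \<alpha>)"
  proof
    fix s assume "s \<in> X"
    then obtain \<alpha> where "\<alpha> \<in> Field r" "dom s = underS r \<alpha>" using assms(3) unfolding kseq_def by blast
    then show "s \<in> (\<Union>\<alpha>\<in>Field r. bounded \<alpha>)" unfolding bounded_def by auto
  qed
  obtain \<alpha> where \<alpha>: "\<alpha> \<in> Field r" "X \<subseteq> bounded \<alpha>"
    using regularCard_UNION[OF assms(1,2) mono cover assms(5)] by blast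
  have "Complete_Partial_Order.chain (\<subseteq>\<^sub>m) X" using assms(4) by (simp add: kinit_eq_map_le)
  then obtain w where w: "dom w = (\<Union>s\<in>X. dom s)" "\<And>s. s \<in> X \<Longrightarrow> s \<subseteq>\<^sub>m w"
    by (rule chain_map_le_upper_bound) blast
  have "dom w \<subseteq> underS r \<alpha>" using \<alpha>(2) unfolding w(1) bounded_def by blast
  then obtain u where "kseq r u" "kinit w u" using kseq_extends_bounded_map[OF \<alpha>(1)] by blast
  then show ?thesis using w(2) map_le_trans unfolding kinit_def by blast
qed

lemma dense_colour_above_some_node:
  fixes r :: "'a rel" and c :: "('a \<Rightarrow> nat option) \<Rightarrow> 'c" and \<Theta> :: "'c set"
  assumes "Cinfinite r" "regularCard r" "(card_of \<Theta>, r) \<in> ordLess"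
    and colours: "\<forall>s. kseq r s \<longrightarrow> c s \<in> \<Theta>"
  shows "\<exists>\<nu>\<^sub>0 j. kseq r \<nu>\<^sub>0 \<and> j \<in> \<Theta> \<and>
           (\<forall>\<nu>. kseq r \<nu> \<and> kinit \<nu>\<^sub>0 \<nu> \<longrightarrow> (\<exists>\<rho>. kseq r \<rho> \<and> kinit \<nu> \<rho> \<and> c \<rho> = j))"
proof (rule ccontr)
  define avoids where "avoids j = {\<nu>. \<forall>\<rho>. kseq r \<rho> \<and> kinit \<nu> \<rho> \<longrightarrow> c \<rho> \<noteq> j}" for j
  assume "\<not> ?thesis"
  then have dense: "\<exists>\<nu>\<in>Collect (kseq r). kinit \<nu>\<^sub>0 \<nu> \<and> \<nu> \<in> avoids j"
    if "j \<in> \<Theta>" "\<nu>\<^sub>0 \<in> Collect (kseq r)" for j \<nu>\<^sub>0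
    using that unfolding avoids_def by blast
  have bounded: "\<exists>u\<in>Collect (kseq r). \<forall>s\<in>X. kinit s u"
    if "X \<subseteq> Collect (kseq r)" "Complete_Partial_Order.chain kinit X"
      "(card_of X, card_of \<Theta>) \<in> ordLeq" for X
  proof -
    have "(card_of X, r) \<in> ordLess" using that(3) assms(3) by (rule ordLeq_ordLess_trans)
    then show ?thesis using kseq_chain_upper_bound[OF _ assms(2) that(1,2)] assms(1) by simp
  qed
  have "reflp kinit" "transp kinit" by (auto intro: reflpI transpI kinit_refl kinit_trans)
  then obtain u where u: "kseq r u" and "\<forall>j\<in>\<Theta>. \<exists>\<nu>\<in>avoids j. kinit \<nu> u"
    using upper_bound_meeting_dense_family[where I = \<Theta> and D = avoids, OF _ _ bounded dense] by blast
  then obtain \<nu> where "\<nu> \<in> avoids (c u)" "kinit \<nu> u" using colours by blast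
  then show False using u unfolding avoids_def by blast
qed

lemma omega_tree_embeds_into_dense_set:
  assumes "Cinfinite r" "kseq r \<nu>\<^sub>0"
    and dense: "\<And>\<nu>. kseq r \<nu> \<Longrightarrow> kinit \<nu>\<^sub>0 \<nu> \<Longrightarrow> \<exists>\<rho>\<in>S. kseq r \<rho> \<and> kinit \<nu> \<rho>"
  shows "\<exists>h. (\<forall>\<eta>. kseq r (h \<eta>) \<and> h \<eta> \<in> S) \<and>
               (\<forall>\<eta> i. kinit (kapp1 r (h \<eta>) i) (h (\<eta> @ [i])))"
proof -
  have co: "Card_order r" using assms(1) by simp
  define good where "good t \<longleftrightarrow> t \<in> S \<and> kseq r t \<and> kinit \<nu>\<^sub>0 t" for t
  define step where "step i t = (SOME \<rho>. good \<rho> \<and> kinit (kapp1 r t i) \<rho>)" for i t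
  have step: "good (step i t) \<and> kinit (kapp1 r t i) (step i t)" if t: "good t" for i t
  proof -
    obtain t' where t': "kseq r t'" "kinit (kapp1 r t i) t'"
      using kapp1_extends_to_kseq[OF assms(1)] t unfolding good_def by blast
    moreover have "kinit \<nu>\<^sub>0 t'"
      using t t'(2) kinit_kapp1[OF co] kinit_trans unfolding good_def by blast
    ultimately have "\<exists>\<rho>. good \<rho> \<and> kinit (kapp1 r t i) \<rho>"
      using dense kinit_trans unfolding good_def by blast
    then show ?thesis unfolding step_def by (rule someI_ex)
  qed
  obtain root where "good root"
    using dense[OF assms(2) kinit_refl] kinit_trans unfolding good_def by blast
  define h where "h \<eta> = fold step \<eta> root" for \<eta>
  have "good (h \<eta>)" for \<eta>
    by (induction \<eta> rule: rev_induct) (simp_all add: h_def \<open>good root\<close> step)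
  moreover have "kinit (kapp1 r (h \<eta>) i) (h (\<eta> @ [i]))" for \<eta> i
    using step[OF \<open>good (h \<eta>)\<close>] by (simp add: h_def)
  ultimately show ?thesis unfolding good_def by blast
qed

lemma kapp1_tree_embeds_prefix_order:
  assumes "Card_order r" and kseq: "\<forall>\<eta>. kseq r (h \<eta>)"
    and succ: "\<forall>\<eta> i. kinit (kapp1 r (h \<eta>) i) (h (\<eta> @ [i]))"
  shows "prefix \<eta> \<nu> \<longleftrightarrow> kinit (h \<eta>) (h \<nu>)"
proof -
  have mono: "kinit (h \<eta>) (h (\<eta> @ zs))" for \<eta> zs
  proof (induction zs rule: rev_induct)
    case (snoc i zs)
    have "kinit (h (\<eta> @ zs)) (h ((\<eta> @ zs) @ [i]))"
      using kinit_kapp1[OF assms(1) kseq[rule_format]] succ kinit_trans by blast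
    then show ?case using snoc.IH kinit_trans by simp
  qed (simp add: kinit_refl)
  have branch: "h (\<eta> @ i # zs) (klen r (h \<eta>)) = Some i" for \<eta> i zs
  proof -
    have "kinit (kapp1 r (h \<eta>) i) (h ((\<eta> @ [i]) @ zs))" using succ mono kinit_trans by blast
    then show ?thesis by (auto simp: kapp1_def elim: kinit_SomeD)
  qed
  have fresh: "h \<eta> (klen r (h \<eta>)) = None" for \<eta>
    using klen_notin_dom[OF assms(1) kseq[rule_format]] by blast
  show ?thesis
  proof
    assume "prefix \<eta> \<nu>"
    then show "kinit (h \<eta>) (h \<nu>)" using mono by (auto elim: prefixE)
  next
    assume le: "kinit (h \<eta>) (h \<nu>)"
    show "prefix \<eta> \<nu>"
    proof (cases rule: prefix_cases[of \<eta> \<nu>])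
      case 2
      then obtain i zs where "\<eta> = \<nu> @ i # zs" by (rule strict_prefixE')
      then show ?thesis using branch fresh kinit_SomeD[OF le] by (metis option.distinct(1))
    next
      case 3
      then obtain \<xi> i xs j ys where "i \<noteq> j" "\<eta> = \<xi> @ i # xs" "\<nu> = \<xi> @ j # ys"
        using parallel_decomp by blast
      then show ?thesis using branch kinit_SomeD[OF le] by (metis option.inject)
    qed
  qed
qed

theorem lemma2p13:
  fixes r :: "'a rel" and c :: "('a \<Rightarrow> nat option) \<Rightarrow> 'c" and \<Theta> :: "'c set"
  assumes "Cinfinite r" and "regularCard r"
    and "(card_of \<Theta>, r) \<in> ordLess"
    and "\<forall>s. kseq r s \<longrightarrow> c s \<in> \<Theta>"
  shows "(\<exists>\<nu>s j. kseq r \<nu>s \<and> j \<in> \<Theta> \<and>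
            (\<forall>\<nu>. kseq r \<nu> \<and> kinit \<nu>s \<nu> \<longrightarrow>
                 (\<exists>\<rho>. kseq r \<rho> \<and> kinit \<nu> \<rho> \<and> c \<rho> = j)))
       \<and> (\<exists>h :: nat list \<Rightarrow> ('a \<Rightarrow> nat option).
            (\<forall>\<eta>. kseq r (h \<eta>)) \<and>
            (\<forall>\<eta> \<nu>. prefix \<eta> \<nu> \<longleftrightarrow> kinit (h \<eta>) (h \<nu>)) \<and>
            (\<forall>\<eta> i. kinit (kapp1 r (h \<eta>) i) (h (\<eta> @ [i]))) \<and>
            (\<forall>\<eta> \<nu>. c (h \<eta>) = c (h \<nu>)))"
proof -
  obtain \<nu>\<^sub>0 j where "kseq r \<nu>\<^sub>0" "j \<in> \<Theta>"
    and recurs: "\<forall>\<nu>. kseq r \<nu> \<and> kinit \<nu>\<^sub>0 \<nu> \<longrightarrow> (\<exists>\<rho>. kseq r \<rho> \<and> kinit \<nu> \<rho> \<and> c \<rho> = j)"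
    using dense_colour_above_some_node[OF assms] by blast
  moreover obtain h where h: "\<forall>\<eta>. kseq r (h \<eta>) \<and> h \<eta> \<in> {\<rho>. c \<rho> = j}"
    and succ: "\<forall>\<eta> i. kinit (kapp1 r (h \<eta>) i) (h (\<eta> @ [i]))"
    using omega_tree_embeds_into_dense_set[OF assms(1) \<open>kseq r \<nu>\<^sub>0\<close>, of "{\<rho>. c \<rho> = j}"] recurs
    by auto
  moreover have "\<forall>\<eta> \<nu>. prefix \<eta> \<nu> \<longleftrightarrow> kinit (h \<eta>) (h \<nu>)"
    using kapp1_tree_embeds_prefix_order[of r h] assms(1) h succ by simp
  ultimately show ?thesis by auto
qed

end
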